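(* Let $P \subset \mathbb{R}^2$ be a finite point set satisfying the standing condition, $\varepsilon \in (0,1)$, and let $G$ be the directed graph defined in the context. If $C^*$ is a directed cycle of $G$ with the minimum number of vertices, then the vertex set of $C^*$ is an $\varepsilon$-regret set of $P$ of minimum cardinality among all $\varepsilon$-regret sets of $P$ (i.e., an optimal solution of GRMR for $P$ and $\varepsilon$).
   Context: For finite $Q \subset \mathbb{R}^2$ and unit $x$, $\omega(x,Q)=\max_{p\in Q}\langle p,x\rangle$. Standing condition: $\omega(x,P)>0$ for all $x\in\mathbb{S}^1$. Regret ratio $l_x(Q) = 1-\omega(x,Q)/\omega(x,P)$, maximum regret ratio $l(Q)=\max_{x\in\mathbb{S}^1} l_x(Q)$; $Q\subseteq P$ is an $\varepsilon$-regret set if $l(Q)\le\varepsilon$. The Voronoi cell of $p$ is $R(p)=\{x\neq 0 : \langle p,x\rangle\ge\omega(x,P)\}$; the extreme points $X=\{t_1,\dots,t_m\}$ are the points with $R(p)\neq\varnothing$ (the convex hull vertices), indexed counterclockwise by polar angle, cyclically. For each $i$, $x^*_i\in\mathbb{S}^1$ is the unit vector with $\langle t_i,x\rangle=\langle t_{i+1},x\rangle$ and $\langle t_i,x\rangle>0$. Candidate set: $S = X\cup\{p\in P\setminus X : \exists i,\ \langle p,x^*_i\rangle\ge(1-\varepsilon)\langle t_i,x^*_i\rangle\}$, indexed $s_1,\dots,s_{|S|}$ counterclockwise by polar angle. For points $a,b$, $X[a,b]$ denotes the extreme points whose polar angles lie in the counterclockwise angular range from the angle of $a$ to the angle of $b$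 (inclusive, wrapping through $2\pi$ if needed). The directed graph $G$ has vertex set $S$, and for $i\neq j$ there is an edge $s_i\to s_j$ iff the counterclockwise angle from $s_i$ to $s_j$ is less than $\pi$ and $l_{ij}\le\varepsilon$, where $l_{ij}=\max_{t\in X[s_i,s_j]}\bigl(1-\langle s_i,x^*\rangle/\langle t,x^*\rangle\bigr)$ (taken as $0$ if $X[s_i,s_j]$ is empty) and $x^*\in\mathbb{S}^1$ is the unit vector with $\langle s_i,x^*\rangle=\langle s_j,x^*\rangle$ and $\langle s_i,x^*\rangle\ge 0$. *)

theory Defs
  imports "HOL-Analysis.Analysis"
begin

text \<open>Points of the plane are represented as complex numbers; the inner product
  is the standard one (x \<bullet> y = Re x * Re y + Im x * Im y), and the polar angle
  of a nonzero point is Arg.\<close>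

definition omega :: "complex \<Rightarrow> complex set \<Rightarrow> real" where
  "omega x Q = Max ((\<lambda>p. p \<bullet> x) ` Q)"

definition regret_ratio :: "complex set \<Rightarrow> complex \<Rightarrow> complex set \<Rightarrow> real" where
  "regret_ratio P x Q = 1 - omega x Q / omega x P"

definition max_regret :: "complex set \<Rightarrow> complex set \<Rightarrow> real" where
  "max_regret P Q = (SUP x\<in>sphere 0 1. regret_ratio P x Q)"

definition regret_set :: "complex set \<Rightarrow> real \<Rightarrow> complex set \<Rightarrow> bool" where
  "regret_set P eps Q \<longleftrightarrow> Q \<noteq> {} \<and> Q \<subseteq> P \<and> max_regret P Q \<le> eps"

definition standing_cond :: "complex set \<Rightarrow> bool" where
  "standing_cond P \<longleftrightarrow> (\<forall>x\<in>sphere 0 1. omega x P > 0)"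

definition voronoi :: "complex set \<Rightarrow> complex \<Rightarrow> complex set" where
  "voronoi P p = {x. x \<noteq> 0 \<and> p \<bullet> x \<ge> omega x P}"

definition extreme_pts :: "complex set \<Rightarrow> complex set" where
  "extreme_pts P = {p\<in>P. voronoi P p \<noteq> {}}"

definition ccw_angle :: "complex \<Rightarrow> complex \<Rightarrow> real" where
  "ccw_angle a b = (let d = Arg b - Arg a in if d < 0 then d + 2 * pi else d)"

definition ccw_succ :: "complex set \<Rightarrow> complex \<Rightarrow> complex \<Rightarrow> bool" where
  "ccw_succ P t t' \<longleftrightarrow> t \<in> extreme_pts P \<and> t' \<in> extreme_pts P \<and> t' \<noteq> t \<and>
     (\<forall>t''\<in>extreme_pts P. t'' \<noteq> t \<longrightarrow> ccw_angle t t' \<le> ccw_angle t t'')"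

definition candidates :: "complex set \<Rightarrow> real \<Rightarrow> complex set" where
  "candidates P eps = extreme_pts P \<union>
     {p \<in> P - extreme_pts P. \<exists>t t' x. ccw_succ P t t' \<and> norm x = 1 \<and>
        t \<bullet> x = t' \<bullet> x \<and> t \<bullet> x > 0 \<and> p \<bullet> x \<ge> (1 - eps) * (t \<bullet> x)}"

definition ext_range :: "complex set \<Rightarrow> complex \<Rightarrow> complex \<Rightarrow> complex set" where
  "ext_range P a b = {t \<in> extreme_pts P. ccw_angle a t \<le> ccw_angle a b}"

definition xstar :: "complex \<Rightarrow> complex \<Rightarrow> complex" where
  "xstar a b = (SOME x. norm x = 1 \<and> a \<bullet> x = b \<bullet> x \<and> a \<bullet> x \<ge> 0)"

definition l_edge :: "complex set \<Rightarrow> complex \<Rightarrow> complex \<Rightarrow> real" where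
  "l_edge P a b = (if ext_range P a b = {} then 0
     else Max ((\<lambda>t. 1 - (a \<bullet> xstar a b) / (t \<bullet> xstar a b)) ` ext_range P a b))"

definition G_edge :: "complex set \<Rightarrow> real \<Rightarrow> complex \<Rightarrow> complex \<Rightarrow> bool" where
  "G_edge P eps a b \<longleftrightarrow> a \<in> candidates P eps \<and> b \<in> candidates P eps \<and> a \<noteq> b \<and>
     0 < ccw_angle a b \<and> ccw_angle a b < pi \<and> l_edge P a b \<le> eps"

definition G_cycle :: "complex set \<Rightarrow> real \<Rightarrow> complex list \<Rightarrow> bool" where
  "G_cycle P eps cs \<longleftrightarrow> cs \<noteq> [] \<and> distinct cs \<and> set cs \<subseteq> candidates P eps \<and>
     (\<forall>i<length cs. G_edge P eps (cs ! i) (cs ! ((i + 1) mod length cs)))"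

end

theory Submission
  imports Defs "HOL-Combinatorics.Orbits"
begin

(* Consecutive vertices have positive counterclockwise
   angle, so the arcs of the cycle cover the circle and every extreme point t lies in the
   cone of the endpoints a, b of some edge: t = alpha a + beta b with alpha, beta >= 0.
   The edge condition l_ab <= eps says (1 - eps) (alpha + beta) <= 1, hence
   max <a,x> <b,x> >= (1 - eps) <t,x> in every direction x in which t is optimal.

   Conversely, an eps-regret set Q has omega(x,Q) > 0 for all x <> 0, and gift wrapping
   (from a hull vertex q go to the farthest q' with all of Q weakly left of the line q q')
   yields a cycle of hull edges of Q, of length at most |Q|. Every hull edge q -> q' is an
   edge of G: in the direction x* = xstar q q' the point q attains omega(x*,Q), so the regret
   condition at x* makes q and q' candidates and bounds l_qq' by eps. *)

lemma finite_arg_min: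
  fixes f :: "'a \<Rightarrow> 'b::linorder"
  assumes "finite S" "S \<noteq> {}"
  obtains x where "x \<in> S" "\<And>y. y \<in> S \<Longrightarrow> f x \<le> f y"
  using ex_is_arg_min_if_finite[OF assms, of f] unfolding is_arg_min_linorder by blast

lemma finite_arg_max:
  fixes f :: "'a \<Rightarrow> 'b::linorder"
  assumes "finite S" "S \<noteq> {}"
  obtains x where "x \<in> S" "\<And>y. y \<in> S \<Longrightarrow> f y \<le> f x"
proof -
  have "Max (f ` S) \<in> f ` S"
    using assms by (intro Max_in) auto
  then obtain x where x: "x \<in> S" "f x = Max (f ` S)"
    by (metis imageE)
  have "f y \<le> f x" if "y \<in> S" for y
    unfolding x(2) using assms(1) that by (intro Max_ge) auto
  then show thesis
    using that x(1) by blast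
qed

section \<open>Cross product and counterclockwise angles\<close>

definition cross :: "complex \<Rightarrow> complex \<Rightarrow> real" where
  "cross a b = Re a * Im b - Im a * Re b"

lemma cos_Arg: "cmod z * cos (Arg z) = Re z" and sin_Arg: "cmod z * sin (Arg z) = Im z"
  by (metis Re_rcis rcis_cmod_Arg, metis Im_rcis rcis_cmod_Arg)

lemma cross_eq_sin_Arg: "cross a b = cmod a * cmod b * sin (Arg b - Arg a)"
  unfolding cross_def sin_diff by (simp add: algebra_simps flip: cos_Arg sin_Arg)

lemma cross_cramer: "cross a b *\<^sub>R t = cross t b *\<^sub>R a + cross a t *\<^sub>R b"
  by (simp add: cross_def complex_eq_iff algebra_simps)

lemma cross_mult_right: "cross (z * c) (w * c) = (cmod c)\<^sup>2 * cross z w"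
  unfolding cross_def cmod_power2 by (simp add: algebra_simps power2_eq_square)

lemma inner_normal: "v \<bullet> (- \<i> * (b - a)) = cross a b - cross (b - a) (v - a)"
  unfolding inner_complex_def cross_def by (simp add: algebra_simps)

lemma cross_eq_0_imp_collinear:
  assumes "cross u v = 0" "u \<noteq> 0"
  shows "v = ((u \<bullet> v) / (cmod u)\<^sup>2) *\<^sub>R u"
proof -
  have "(cmod u)\<^sup>2 * Re v = (u \<bullet> v) * Re u" "(cmod u)\<^sup>2 * Im v = (u \<bullet> v) * Im u"
    using assms(1) unfolding cross_def inner_complex_def cmod_power2
    by (simp_all add: algebra_simps power2_eq_square)
  then show ?thesis
    using assms(2) by (simp add: complex_eq_iff field_simps)
qed

lemma ccw_angle_bounds: "0 \<le> ccw_angle a b" "ccw_angle a b < 2 * pi"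
  using Arg_bounded[of a] Arg_bounded[of b] unfolding ccw_angle_def Let_def by auto

lemma ccw_angle_eq_0_iff: "ccw_angle a b = 0 \<longleftrightarrow> Arg b = Arg a"
  using Arg_bounded[of a] Arg_bounded[of b] unfolding ccw_angle_def Let_def by auto

lemma ccw_angle_diff:
  "ccw_angle a b \<le> ccw_angle a c \<Longrightarrow> ccw_angle b c = ccw_angle a c - ccw_angle a b"
  using Arg_bounded[of a] Arg_bounded[of b] Arg_bounded[of c] unfolding ccw_angle_def Let_def
  by (auto split: if_splits)

lemma cross_eq_sin_ccw_angle: "cross a b = cmod a * cmod b * sin (ccw_angle a b)"
  unfolding cross_eq_sin_Arg ccw_angle_def Let_def by (simp add: sin_add)

lemma cross_pos_iff_ccw_angle:
  assumes "a \<noteq> 0" "b \<noteq> 0"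
  shows "0 < cross a b \<longleftrightarrow> 0 < ccw_angle a b \<and> ccw_angle a b < pi"
proof -
  have "0 < cmod a * cmod b"
    using assms by simp
  then have "0 < cross a b \<longleftrightarrow> 0 < sin (ccw_angle a b)"
    by (metis cross_eq_sin_ccw_angle mult_pos_pos zero_less_mult_pos)
  also have "\<dots> \<longleftrightarrow> 0 < ccw_angle a b \<and> ccw_angle a b < pi"
  proof
    assume sin_pos: "0 < sin (ccw_angle a b)"
    have "\<not> pi \<le> ccw_angle a b"
      using sin_le_zero[of "ccw_angle a b"] ccw_angle_bounds[of a b] sin_pos by force
    moreover have "ccw_angle a b \<noteq> 0"
      using sin_pos by auto
    ultimately show "0 < ccw_angle a b \<and> ccw_angle a b < pi"
      using ccw_angle_bounds[of a b] by auto
  qed (simp add: sin_gt_zero)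
  finally show ?thesis .
qed

lemma ccw_cone:
  assumes "a \<noteq> 0" "b \<noteq> 0" "0 < ccw_angle a b" "ccw_angle a b < pi"
    and "ccw_angle a t \<le> ccw_angle a b"
  obtains \<alpha> \<beta> where "0 \<le> \<alpha>" "0 \<le> \<beta>" "t = \<alpha> *\<^sub>R a + \<beta> *\<^sub>R b"
proof -
  have ab: "0 < cross a b"
    using cross_pos_iff_ccw_angle assms by blast
  have "0 \<le> sin (ccw_angle a t)"
    using assms ccw_angle_bounds[of a t] by (intro sin_ge_zero) auto
  then have at: "0 \<le> cross a t"
    by (simp add: cross_eq_sin_ccw_angle)
  have "0 \<le> sin (ccw_angle a b - ccw_angle a t)"
    using assms ccw_angle_bounds[of a t] by (intro sin_ge_zero) auto
  then have tb: "0 \<le> cross t b"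
    by (simp add: cross_eq_sin_ccw_angle ccw_angle_diff[OF assms(5)])
  define \<alpha> where "\<alpha> = cross t b / cross a b"
  define \<beta> where "\<beta> = cross a t / cross a b"
  have "t = inverse (cross a b) *\<^sub>R (cross a b *\<^sub>R t)"
    using ab by simp
  also have "\<dots> = \<alpha> *\<^sub>R a + \<beta> *\<^sub>R b"
    unfolding cross_cramer[of a b t] \<alpha>_def \<beta>_def by (simp add: scaleR_add_right divide_inverse_commute)
  finally have "t = \<alpha> *\<^sub>R a + \<beta> *\<^sub>R b" .
  moreover have "0 \<le> \<alpha>" "0 \<le> \<beta>"
    using ab at tb by (simp_all add: \<alpha>_def \<beta>_def)
  ultimately show thesis
    by (intro that)
qed

lemma ccw_cycle_covers:
  assumes "cs \<noteq> []" "\<forall>i<length cs. 0 < ccw_angle (cs ! i) (cs ! ((i + 1) mod length cs))"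
  shows "\<exists>i<length cs. ccw_angle (cs ! i) t \<le> ccw_angle (cs ! i) (cs ! ((i + 1) mod length cs))"
proof (rule ccontr)
  define n where "n = length cs"
  define \<phi> where "\<phi> k = ccw_angle (cs ! k) t" for k
  assume not_covered: "\<not> ?thesis"
  have step: "\<phi> ((i + 1) mod n) < \<phi> i" if "i < n" for i
  proof -
    have "ccw_angle (cs ! i) (cs ! ((i + 1) mod n)) < \<phi> i"
      using not_covered that unfolding \<phi>_def n_def by (simp add: not_le)
    then have "\<phi> ((i + 1) mod n) = \<phi> i - ccw_angle (cs ! i) (cs ! ((i + 1) mod n))"
      using ccw_angle_diff[of "cs ! i" "cs ! ((i + 1) mod n)" t] unfolding \<phi>_def by simp
    moreover have "0 < ccw_angle (cs ! i) (cs ! ((i + 1) mod n))"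
      using assms(2) that unfolding n_def by blast
    ultimately show ?thesis
      by linarith
  qed
  have "0 < n"
    using assms(1) unfolding n_def by simp
  have "\<phi> k \<le> \<phi> 0" if "k < n" for k
    using that
  proof (induction k)
    case (Suc k)
    then show ?case
      using step[of k] by simp
  qed simp
  from this[of "n - 1"] step[of "n - 1"] \<open>0 < n\<close> show False
    by simp
qed

section \<open>The direction of equal support\<close>

lemma inner_sgn: "v \<bullet> sgn r = (v \<bullet> r) / cmod r"
  unfolding inner_complex_def by (simp add: add_divide_distrib)

(* The constraints under the SOME in xstar determine it uniquely: it is the unit normal of the
   segment from a to b on the side away from the origin. *)
lemma xstar_eq_sgn_normal:
  assumes "0 < cross a b"
  shows "xstar a b = sgn (- \<i> * (b - a))"
proof -
  define r where "r = - \<i> * (b - a)"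
  have r: "a \<bullet> r = cross a b" "b \<bullet> r = cross a b"
    unfolding r_def inner_normal by (simp_all add: cross_def)
  then have "r \<noteq> 0"
    using assms by auto
  have unique: "x = sgn r" if x: "norm x = 1" "a \<bullet> x = b \<bullet> x" "0 \<le> a \<bullet> x" for x
  proof -
    define c where "c = (r \<bullet> x) / (cmod r)\<^sup>2"
    have "cross r x = 0"
      using x(2) unfolding r_def by (simp add: cross_def inner_complex_def algebra_simps)
    then have xr: "x = c *\<^sub>R r"
      unfolding c_def using \<open>r \<noteq> 0\<close> by (rule cross_eq_0_imp_collinear)
    have "0 \<le> c * cross a b"
      using x(3) r(1) unfolding xr by simp
    then have "0 \<le> c"
      using assms by (simp add: zero_le_mult_iff)
    moreover have "\<bar>c\<bar> * cmod r = 1"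
      using x(1) unfolding xr by simp
    ultimately have "c = inverse (cmod r)"
      using \<open>r \<noteq> 0\<close> by (simp add: field_simps)
    then show ?thesis
      unfolding xr sgn_div_norm by simp
  qed
  show ?thesis
    unfolding xstar_def r_def[symmetric]
  proof (rule some_equality)
    show "norm (sgn r) = 1 \<and> a \<bullet> sgn r = b \<bullet> sgn r \<and> 0 \<le> a \<bullet> sgn r"
      using r \<open>r \<noteq> 0\<close> assms by (simp add: norm_sgn inner_sgn)
  qed (use unique in blast)
qed

lemma norm_xstar: "0 < cross a b \<Longrightarrow> norm (xstar a b) = 1"
  by (auto simp: xstar_eq_sgn_normal norm_sgn cross_def)

lemma inner_xstar:
  assumes "0 < cross a b"
  shows "v \<bullet> xstar a b = (cross a b - cross (b - a) (v - a)) / cmod (b - a)"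
  unfolding xstar_eq_sgn_normal[OF assms] inner_sgn inner_normal by (simp add: norm_mult)

lemma inner_xstar_endpoints:
  assumes "0 < cross a b"
  shows "b \<bullet> xstar a b = a \<bullet> xstar a b" "0 < a \<bullet> xstar a b"
proof -
  have "b \<noteq> a"
    using assms by (auto simp: cross_def)
  have "a \<bullet> xstar a b = cross a b / cmod (b - a)" "b \<bullet> xstar a b = cross a b / cmod (b - a)"
    using assms by (simp_all add: inner_xstar cross_def)
  then show "b \<bullet> xstar a b = a \<bullet> xstar a b" "0 < a \<bullet> xstar a b"
    using assms \<open>b \<noteq> a\<close> by simp_all
qed

lemma inner_xstar_pos_cone:
  assumes "0 < cross a b" "0 \<le> \<alpha>" "0 \<le> \<beta>" "t = \<alpha> *\<^sub>R a + \<beta> *\<^sub>R b" "t \<noteq> 0"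
  shows "t \<bullet> xstar a b = (\<alpha> + \<beta>) * (a \<bullet> xstar a b)" "0 < t \<bullet> xstar a b"
proof -
  note ab = inner_xstar_endpoints[OF assms(1)]
  show eq: "t \<bullet> xstar a b = (\<alpha> + \<beta>) * (a \<bullet> xstar a b)"
    using ab(1) by (simp add: assms(4) inner_add_left algebra_simps)
  have "\<alpha> + \<beta> \<noteq> 0"
  proof
    assume "\<alpha> + \<beta> = 0"
    then have "\<alpha> = 0" "\<beta> = 0"
      using assms(2,3) by auto
    then show False
      using assms(4,5) by simp
  qed
  then have "0 < \<alpha> + \<beta>"
    using assms(2,3) by simp
  then show "0 < t \<bullet> xstar a b"
    using eq ab(2) by simp
qed

lemma l_edge_le_iff:
  assumes "finite (extreme_pts P)" "0 \<le> e"
  shows "l_edge P a b \<le> e \<longleftrightarrow>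
    (\<forall>t\<in>ext_range P a b. 1 - (a \<bullet> xstar a b) / (t \<bullet> xstar a b) \<le> e)"
proof -
  have "finite (ext_range P a b)"
    using assms(1) unfolding ext_range_def by simp
  then show ?thesis
    using assms(2) unfolding l_edge_def by (auto simp: Max_le_iff)
qed

section \<open>Support functions\<close>

lemma inner_le_omega: "finite Q \<Longrightarrow> p \<in> Q \<Longrightarrow> p \<bullet> x \<le> omega x Q"
  unfolding omega_def by (intro Max_ge) auto

lemma omega_attained: "finite Q \<Longrightarrow> Q \<noteq> {} \<Longrightarrow> \<exists>p\<in>Q. p \<bullet> x = omega x Q"
  unfolding omega_def using Max_in[of "(\<lambda>p. p \<bullet> x) ` Q"]
  by (metis finite_imageI image_iff image_is_empty)

lemma omega_le:
  "finite Q \<Longrightarrow> Q \<noteq> {} \<Longrightarrow> (\<And>p. p \<in> Q \<Longrightarrow> p \<bullet> x \<le> c) \<Longrightarrow> omega x Q \<le> c"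
  using omega_attained by metis

lemma omega_scaleR:
  assumes "finite Q" "Q \<noteq> {}" "0 \<le> c"
  shows "omega (c *\<^sub>R x) Q = c * omega x Q"
proof (rule antisym)
  show "omega (c *\<^sub>R x) Q \<le> c * omega x Q"
    using assms by (intro omega_le) (auto intro!: mult_left_mono inner_le_omega)
  obtain p where "p \<in> Q" "p \<bullet> x = omega x Q"
    using omega_attained assms by metis
  then show "c * omega x Q \<le> omega (c *\<^sub>R x) Q"
    using inner_le_omega[OF assms(1), of p "c *\<^sub>R x"] by simp
qed

lemma omega_sgn:
  assumes "finite Q" "Q \<noteq> {}"
  shows "omega x Q = cmod x * omega (sgn x) Q"
  using omega_scaleR[OF assms norm_ge_zero, of x "sgn x"] by (cases "x = 0") (simp_all add: sgn_div_norm)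

lemma continuous_on_omega: "finite Q \<Longrightarrow> Q \<noteq> {} \<Longrightarrow> continuous_on S (\<lambda>x. omega x Q)"
proof (induction Q rule: finite_ne_induct)
  case (singleton p)
  then show ?case
    unfolding omega_def by (simp add: continuous_on_inner continuous_on_id continuous_on_const)
next
  case (insert p F)
  have "omega x (insert p F) = max (p \<bullet> x) (omega x F)" for x
    unfolding omega_def using insert by (simp add: Max_insert)
  then show ?case
    using insert by (simp add: continuous_on_max continuous_on_inner continuous_on_id continuous_on_const)
qed

lemma omega_pos_not_singleton:
  assumes "\<And>x. x \<noteq> 0 \<Longrightarrow> 0 < omega x Q"
  shows "\<not> is_singleton Q"
proof
  assume "is_singleton Q"
  then obtain q where Q: "Q = {q}"
    by (auto simp: is_singleton_def)
  define y where "y = (if q = 0 then 1 else - q)"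
  have "omega y Q = q \<bullet> y"
    unfolding Q omega_def by simp
  moreover have "q \<bullet> y \<le> 0" "y \<noteq> 0"
    unfolding y_def by auto
  ultimately show False
    using assms[of y] by simp
qed

section \<open>Cycles of a self-map of a finite set\<close>

lemma periodic_point_exists:
  assumes "finite V" "q \<in> V" "f ` V \<subseteq> V"
  obtains p n where "p \<in> V" "0 < n" "(f ^^ n) p = p"
proof -
  have iter: "(f ^^ k) q \<in> V" for k
    using assms(2,3) by (induction k) auto
  then have "card ((\<lambda>k. (f ^^ k) q) ` {..card V}) < card {..card V}"
    using assms(1) by (simp add: image_subset_iff card_mono le_imp_less_Suc)
  then have "\<not> inj_on (\<lambda>k. (f ^^ k) q) {..card V}"
    by (rule pigeonhole)
  then have "\<exists>i j. i < j \<and> (f ^^ i) q = (f ^^ j) q"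
    unfolding inj_on_def by (metis nat_neq_iff)
  then obtain i j where ij: "i < j" "(f ^^ i) q = (f ^^ j) q"
    by blast
  have "(f ^^ (j - i)) ((f ^^ i) q) = (f ^^ (j - i + i)) q"
    by (simp only: funpow_add comp_apply)
  then have "(f ^^ (j - i)) ((f ^^ i) q) = (f ^^ i) q"
    using ij by simp
  moreover have "0 < j - i"
    using ij(1) by simp
  ultimately show thesis
    using that iter by blast
qed

lemma self_map_cycle:
  assumes "finite V" "q \<in> V" "f ` V \<subseteq> V"
  shows "\<exists>cs. cs \<noteq> [] \<and> distinct cs \<and> set cs \<subseteq> V \<and>
    (\<forall>i<length cs. cs ! ((i + 1) mod length cs) = f (cs ! i))"
proof -
  obtain p n where p: "p \<in> V" "0 < n" "(f ^^ n) p = p"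
    using periodic_point_exists assms by metis
  then have "p \<in> orbit f p"
    unfolding orbit_altdef by force
  define m where "m = funpow_dist1 f p p"
  define cs where "cs = map (\<lambda>k. (f ^^ k) p) [0..<m]"
  have "0 < m" "(f ^^ m) p = p"
    unfolding m_def using funpow_dist1_prop[OF \<open>p \<in> orbit f p\<close>] by simp_all
  have "inj_on (\<lambda>k. (f ^^ k) p) {0..<m}"
    unfolding m_def using \<open>p \<in> orbit f p\<close> by (rule inj_on_funpow_dist1)
  then have "distinct cs"
    unfolding cs_def by (simp add: distinct_map)
  moreover have "set cs \<subseteq> V"
  proof -
    have "(f ^^ k) p \<in> V" for k
      using p(1) assms(3) by (induction k) auto
    then show ?thesis
      unfolding cs_def by auto
  qed
  moreover have "cs ! ((i + 1) mod m) = f (cs ! i)" if "i < m" for i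
  proof (cases "i + 1 < m")
    case False
    then have "i + 1 = m"
      using that by simp
    then show ?thesis
      using \<open>(f ^^ m) p = p\<close> that unfolding cs_def by auto
  qed (simp add: cs_def)
  moreover have "length cs = m"
    unfolding cs_def by simp
  ultimately show ?thesis
    using \<open>0 < m\<close> by (intro exI[of _ cs]) auto
qed

section \<open>Gift wrapping\<close>

definition hull_edge :: "complex set \<Rightarrow> complex \<Rightarrow> complex \<Rightarrow> bool" where
  "hull_edge Q q q' \<longleftrightarrow>
    q \<in> Q \<and> q' \<in> Q \<and> q' \<noteq> q \<and> (\<forall>p\<in>Q. 0 \<le> cross (q' - q) (p - q))"

lemma hull_edge_if_Arg_range:
  assumes "finite Q" "q \<in> Q" "Q - {q} \<noteq> {}" "c \<noteq> 0"
    and range: "\<And>p. p \<in> Q - {q} \<Longrightarrow> lo < Arg ((p - q) * c) \<and> Arg ((p - q) * c) \<le> lo + pi"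
  shows "\<exists>q'. hull_edge Q q q'"
proof -
  obtain q' where q': "q' \<in> Q - {q}"
    "\<And>p. p \<in> Q - {q} \<Longrightarrow> Arg ((q' - q) * c) \<le> Arg ((p - q) * c)"
    using finite_arg_min[of "Q - {q}" "\<lambda>p. Arg ((p - q) * c)"] assms(1,3) by blast
  have "0 \<le> cross (q' - q) (p - q)" if "p \<in> Q" for p
  proof (cases "p = q")
    case False
    then have p: "p \<in> Q - {q}"
      using that by simp
    have "0 \<le> sin (Arg ((p - q) * c) - Arg ((q' - q) * c))"
      using range[OF p] range[OF q'(1)] q'(2)[OF p] by (intro sin_ge_zero) linarith+
    then have "0 \<le> cross ((q' - q) * c) ((p - q) * c)"
      unfolding cross_eq_sin_Arg by simp
    then have "0 \<le> (cmod c)\<^sup>2 * cross (q' - q) (p - q)"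
      by (simp only: cross_mult_right)
    then show ?thesis
      using assms(4) by (simp add: zero_le_mult_iff)
  qed (simp add: cross_def)
  then have "hull_edge Q q q'"
    unfolding hull_edge_def using assms(2) q'(1) by blast
  then show ?thesis ..
qed

lemma hull_edge_exists:
  assumes "finite Q" "Q \<noteq> {}" "\<not> is_singleton Q"
  shows "\<exists>q q'. hull_edge Q q q'"
proof -
  obtain a where a: "a \<in> Q" "\<And>p. p \<in> Q \<Longrightarrow> Re p \<le> Re a"
    using finite_arg_max[of Q Re] assms(1,2) by blast
  have "finite {p \<in> Q. Re p = Re a}" "{p \<in> Q. Re p = Re a} \<noteq> {}"
    using assms(1) a(1) by auto
  then obtain q where q: "q \<in> {p \<in> Q. Re p = Re a}"
    "\<And>p. p \<in> {p \<in> Q. Re p = Re a} \<Longrightarrow> Im p \<le> Im q"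
    by (rule finite_arg_max[where f = Im]) blast
  have "-pi < Arg ((p - q) * \<i>) \<and> Arg ((p - q) * \<i>) \<le> -pi + pi" if p: "p \<in> Q - {q}" for p
  proof -
    define z where "z = (p - q) * \<i>"
    have z: "Im z = Re p - Re q" "Re z = Im q - Im p"
      unfolding z_def by simp_all
    have "Arg z \<le> 0"
    proof (cases "Re p < Re q")
      case True
      then show ?thesis
        using z Arg_neg_iff[of z] by simp
    next
      case False
      then have "Re p = Re q"
        using a(2) q(1) p by force
      moreover have "Im p \<noteq> Im q"
        using calculation p complex_eqI by blast
      ultimately have "0 < Re z" "Im z = 0"
        using z q p by force+
      then have "Arg z = 0"
        by (simp add: Arg_eq_0 complex_is_Real_iff)
      then show ?thesis
        by simp
    qed
    then show ?thesis
      using Arg_bounded[of z] unfolding z_def by simp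
  qed
  moreover have "Q - {q} \<noteq> {}"
    using assms(3) q(1) unfolding is_singleton_def by blast
  ultimately show ?thesis
    using hull_edge_if_Arg_range[OF assms(1), of q \<i> "-pi"] q(1) by auto
qed

lemma hull_edge_extend:
  assumes "hull_edge Q q q'" "p \<in> Q" "p - q = \<mu> *\<^sub>R (q' - q)" "1 \<le> \<mu>"
  shows "hull_edge Q q p"
proof -
  have "p \<noteq> q"
    using assms unfolding hull_edge_def by auto
  moreover have "cross (p - q) (r - q) = \<mu> * cross (q' - q) (r - q)" for r
    unfolding assms(3) cross_def by (simp add: algebra_simps)
  ultimately show ?thesis
    using assms unfolding hull_edge_def by auto
qed

lemma hull_edge_farthest_collinear:
  assumes e: "hull_edge Q q q'"
    and far: "\<And>q''. hull_edge Q q q'' \<Longrightarrow> cmod (q'' - q) \<le> cmod (q' - q)"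
    and p: "p \<in> Q" "p \<noteq> q'" "cross (q' - q) (p - q) = 0"
  shows "(p - q') \<bullet> (q' - q) < 0"
proof -
  define u where "u = q' - q"
  define \<mu> where "\<mu> = (u \<bullet> (p - q)) / (cmod u)\<^sup>2"
  have "u \<noteq> 0"
    using e unfolding hull_edge_def u_def by simp
  have pq: "p - q = \<mu> *\<^sub>R u"
    using cross_eq_0_imp_collinear p(3) \<open>u \<noteq> 0\<close> unfolding u_def \<mu>_def by blast
  have "\<mu> < 1"
  proof (rule ccontr)
    assume "\<not> \<mu> < 1"
    then have "hull_edge Q q p"
      using hull_edge_extend e p(1) pq unfolding u_def by force
    then have "cmod (\<mu> *\<^sub>R u) \<le> cmod u"
      using far pq unfolding u_def by metis
    then have "\<mu> = 1"
      using \<open>\<not> \<mu> < 1\<close> \<open>u \<noteq> 0\<close> by (simp add: mult_le_cancel_right2)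
    then show False
      using pq p(2) unfolding u_def by simp
  qed
  have "p - q' = (p - q) - u"
    unfolding u_def by simp
  also have "\<dots> = (\<mu> - 1) *\<^sub>R u"
    unfolding pq by (simp add: scaleR_diff_left)
  finally have "(p - q') \<bullet> u = (\<mu> - 1) * (cmod u)\<^sup>2"
    by (simp add: power2_norm_eq_inner)
  then show ?thesis
    using \<open>\<mu> < 1\<close> \<open>u \<noteq> 0\<close> unfolding u_def by (simp add: mult_neg_pos)
qed

lemma hull_edge_farthest_continues:
  assumes "finite Q" and e: "hull_edge Q q q'"
    and far: "\<And>q''. hull_edge Q q q'' \<Longrightarrow> cmod (q'' - q) \<le> cmod (q' - q)"
  shows "\<exists>q''. hull_edge Q q' q''"
proof -
  define u where "u = q' - q"
  (* Seen from q' and measured from the direction u, every other point of Q has angle in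
     (0, pi]: strictly left of the line through q and q', or on it behind q' as q' is farthest. *)
  have "0 < Arg ((p - q') * cnj u) \<and> Arg ((p - q') * cnj u) \<le> 0 + pi" if p: "p \<in> Q - {q'}" for p
  proof -
    define z where "z = (p - q') * cnj u"
    have "Im z = cross u (p - q)"
      unfolding z_def u_def cross_def by (simp add: algebra_simps)
    then consider "0 < Im z" | "Im z = 0" "cross u (p - q) = 0"
      using e p unfolding hull_edge_def u_def by force
    then show ?thesis
    proof cases
      case 1
      then show ?thesis
        using Arg_lt_pi[of z] unfolding z_def by auto
    next
      case 2
      have "Re z = (p - q') \<bullet> u"
        unfolding z_def inner_complex_def by simp
      then have "Re z < 0"
        using hull_edge_farthest_collinear[OF e far] p 2(2) unfolding u_def by auto
      then show ?thesis
        using 2(1) Arg_eq_pi[of z] unfolding z_def by simp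
    qed
  qed
  moreover have "q' \<in> Q" "q \<in> Q - {q'}" "cnj u \<noteq> 0"
    using e unfolding hull_edge_def u_def by auto
  ultimately show ?thesis
    using hull_edge_if_Arg_range[OF assms(1), of q' "cnj u" 0] by blast
qed

lemma hull_edge_cross_pos:
  assumes "finite Q" "\<And>y. y \<noteq> 0 \<Longrightarrow> 0 < omega y Q" "hull_edge Q q q'"
  shows "0 < cross q q'"
proof -
  define r where "r = - \<i> * (q' - q)"
  have "p \<bullet> r \<le> cross q q'" if "p \<in> Q" for p
    using assms(3) that unfolding hull_edge_def r_def inner_normal by simp
  then have "omega r Q \<le> cross q q'"
    using omega_le assms(1,3) unfolding hull_edge_def by blast
  moreover have "r \<noteq> 0"
    using assms(3) unfolding hull_edge_def r_def by simp
  ultimately show ?thesis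
    using assms(2) by force
qed

lemma hull_edge_omega_xstar:
  assumes "finite Q" "hull_edge Q q q'" "0 < cross q q'"
  shows "omega (xstar q q') Q = q \<bullet> xstar q q'"
proof (rule antisym)
  have "p \<bullet> xstar q q' \<le> q \<bullet> xstar q q'" if "p \<in> Q" for p
    using assms(2,3) that unfolding hull_edge_def
    by (simp add: inner_xstar divide_right_mono cross_def)
  then show "omega (xstar q q') Q \<le> q \<bullet> xstar q q'"
    using omega_le assms(1,2) unfolding hull_edge_def by blast
  show "q \<bullet> xstar q q' \<le> omega (xstar q q') Q"
    using inner_le_omega assms(1,2) unfolding hull_edge_def by blast
qed

lemma farthest_hull_edge_exists:
  assumes "finite Q" "hull_edge Q q q0"
  shows "\<exists>q'. hull_edge Q q q' \<and>
    (\<forall>q''. hull_edge Q q q'' \<longrightarrow> cmod (q'' - q) \<le> cmod (q' - q))"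
proof -
  have "finite {q'. hull_edge Q q q'}" "{q'. hull_edge Q q q'} \<noteq> {}"
    using assms unfolding hull_edge_def by auto
  then obtain q' where "q' \<in> {q'. hull_edge Q q q'}"
    "\<And>q''. q'' \<in> {q'. hull_edge Q q q'} \<Longrightarrow> cmod (q'' - q) \<le> cmod (q' - q)"
    by (rule finite_arg_max[where f = "\<lambda>q'. cmod (q' - q)"]) blast
  then show ?thesis
    by blast
qed

lemma hull_edge_cycle_exists:
  assumes "finite Q" "Q \<noteq> {}" "\<not> is_singleton Q"
  obtains cs where "cs \<noteq> []" "distinct cs"
    "\<And>i. i < length cs \<Longrightarrow> hull_edge Q (cs ! i) (cs ! ((i + 1) mod length cs))"
proof -
  define V where "V = {q. \<exists>q'. hull_edge Q q q'}"
  have "\<forall>q\<in>V. \<exists>q'. hull_edge Q q q' \<and>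
      (\<forall>q''. hull_edge Q q q'' \<longrightarrow> cmod (q'' - q) \<le> cmod (q' - q))"
    using farthest_hull_edge_exists[OF assms(1)] unfolding V_def by blast
  then have "\<exists>f. \<forall>q\<in>V. hull_edge Q q (f q) \<and>
      (\<forall>q''. hull_edge Q q q'' \<longrightarrow> cmod (q'' - q) \<le> cmod (f q - q))"
    by (rule bchoice)
  then obtain f where f: "\<And>q. q \<in> V \<Longrightarrow> hull_edge Q q (f q)"
    "\<And>q q''. q \<in> V \<Longrightarrow> hull_edge Q q q'' \<Longrightarrow> cmod (q'' - q) \<le> cmod (f q - q)"
    by blast
  have "f q \<in> V" if "q \<in> V" for q
    using hull_edge_farthest_continues[OF assms(1) f(1)[OF that] f(2)[OF that]]
    unfolding V_def by simp
  then have "f ` V \<subseteq> V"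
    by blast
  moreover have "finite V"
    using assms(1) unfolding V_def hull_edge_def by (simp add: finite_subset subset_eq)
  moreover obtain q where "q \<in> V"
    using hull_edge_exists[OF assms] unfolding V_def by blast
  ultimately have "\<exists>cs. cs \<noteq> [] \<and> distinct cs \<and> set cs \<subseteq> V \<and>
      (\<forall>i<length cs. cs ! ((i + 1) mod length cs) = f (cs ! i))"
    by (intro self_map_cycle)
  then obtain cs where cs: "cs \<noteq> []" "distinct cs" "set cs \<subseteq> V"
    "\<forall>i<length cs. cs ! ((i + 1) mod length cs) = f (cs ! i)"
    by blast
  have "hull_edge Q (cs ! i) (cs ! ((i + 1) mod length cs))" if "i < length cs" for i
  proof -
    have "cs ! i \<in> V"
      using that cs(3) nth_mem by blast
    then show ?thesis
      using f(1) cs(4) that by simp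
  qed
  then show thesis
    using that cs(1,2) by blast
qed

section \<open>Regret sets, extreme points and candidates\<close>

locale regret_problem =
  fixes P :: "complex set" and eps :: real
  assumes finite_P: "finite P" and P_nonempty: "P \<noteq> {}" and standing: "standing_cond P"
    and eps_pos: "0 < eps" and eps_less_1: "eps < 1"
begin

abbreviation X :: "complex set" where
  "X \<equiv> extreme_pts P"

lemma omega_P_pos:
  assumes "x \<noteq> 0"
  shows "0 < omega x P"
proof -
  have "sgn x \<in> sphere 0 1"
    using assms by (simp add: norm_sgn)
  then have "0 < omega (sgn x) P"
    using standing unfolding standing_cond_def by blast
  then show ?thesis
    using assms omega_sgn[OF finite_P P_nonempty, of x] by simp
qed

lemma bdd_above_regret_ratio:
  assumes "finite Q" "Q \<noteq> {}"
  shows "bdd_above ((\<lambda>x. regret_ratio P x Q) ` sphere 0 1)"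
proof -
  have "\<forall>x\<in>sphere 0 1. omega x P \<noteq> 0"
    using omega_P_pos by (metis less_irrefl norm_zero zero_neq_one mem_sphere_0)
  then have "continuous_on (sphere 0 1) (\<lambda>x. omega x Q / omega x P)"
    by (rule continuous_on_divide[OF continuous_on_omega[OF assms] continuous_on_omega[OF finite_P P_nonempty]])
  then have "continuous_on (sphere 0 1) (\<lambda>x. regret_ratio P x Q)"
    unfolding regret_ratio_def by (rule continuous_on_diff[OF continuous_on_const])
  then have "compact ((\<lambda>x. regret_ratio P x Q) ` sphere 0 1)"
    by (rule compact_continuous_image[OF _ compact_sphere])
  then show ?thesis
    by (intro bounded_imp_bdd_above compact_imp_bounded)
qed

lemma regret_bound_sphere_iff:
  assumes "finite Q" "Q \<noteq> {}"
  shows "(\<forall>x\<in>sphere 0 1. (1 - e) * omega x P \<le> omega x Q) \<longleftrightarrow>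
    (\<forall>x. x \<noteq> 0 \<longrightarrow> (1 - e) * omega x P \<le> omega x Q)"
proof
  assume unit: "\<forall>x\<in>sphere 0 1. (1 - e) * omega x P \<le> omega x Q"
  show "\<forall>x. x \<noteq> 0 \<longrightarrow> (1 - e) * omega x P \<le> omega x Q"
  proof (intro allI impI)
    fix x :: complex
    assume "x \<noteq> 0"
    then have "(1 - e) * omega (sgn x) P \<le> omega (sgn x) Q"
      using unit[rule_format, of "sgn x"] by (simp add: norm_sgn)
    then have "cmod x * ((1 - e) * omega (sgn x) P) \<le> cmod x * omega (sgn x) Q"
      by (simp add: mult_left_mono)
    then show "(1 - e) * omega x P \<le> omega x Q"
      using omega_sgn[OF finite_P P_nonempty, of x] omega_sgn[OF assms, of x]
      by (simp add: algebra_simps)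
  qed
next
  assume "\<forall>x. x \<noteq> 0 \<longrightarrow> (1 - e) * omega x P \<le> omega x Q"
  then show "\<forall>x\<in>sphere 0 1. (1 - e) * omega x P \<le> omega x Q"
    by (metis norm_zero zero_neq_one mem_sphere_0)
qed

lemma max_regret_le_iff:
  assumes "finite Q" "Q \<noteq> {}"
  shows "max_regret P Q \<le> e \<longleftrightarrow> (\<forall>x. x \<noteq> 0 \<longrightarrow> (1 - e) * omega x P \<le> omega x Q)"
proof -
  have "max_regret P Q \<le> e \<longleftrightarrow> (\<forall>x\<in>sphere 0 1. regret_ratio P x Q \<le> e)"
    unfolding max_regret_def using bdd_above_regret_ratio[OF assms]
    by (rule cSUP_le_iff[rotated]) (metis norm_one mem_sphere_0 empty_iff)
  also have "\<dots> \<longleftrightarrow> (\<forall>x\<in>sphere 0 1. (1 - e) * omega x P \<le> omega x Q)"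
  proof (rule ball_cong[OF refl])
    fix x :: complex
    assume "x \<in> sphere 0 1"
    then have "0 < omega x P"
      by (intro omega_P_pos) auto
    then show "regret_ratio P x Q \<le> e \<longleftrightarrow> (1 - e) * omega x P \<le> omega x Q"
      unfolding regret_ratio_def by (simp add: field_simps)
  qed
  also have "\<dots> \<longleftrightarrow> (\<forall>x. x \<noteq> 0 \<longrightarrow> (1 - e) * omega x P \<le> omega x Q)"
    by (rule regret_bound_sphere_iff[OF assms])
  finally show ?thesis .
qed

lemma regret_set_iff:
  "regret_set P e Q \<longleftrightarrow>
    Q \<noteq> {} \<and> Q \<subseteq> P \<and> (\<forall>x. x \<noteq> 0 \<longrightarrow> (1 - e) * omega x P \<le> omega x Q)"
  unfolding regret_set_def using max_regret_le_iff[OF finite_subset[OF _ finite_P]] by blast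

lemma regret_set_omega_pos:
  assumes "regret_set P eps Q" "x \<noteq> 0"
  shows "0 < omega x Q"
proof -
  have "0 < (1 - eps) * omega x P"
    using omega_P_pos[OF assms(2)] eps_less_1 by simp
  then show ?thesis
    using assms unfolding regret_set_iff by force
qed

lemma extreme_pts_subset: "X \<subseteq> P"
  unfolding extreme_pts_def by auto

lemma finite_extreme_pts: "finite X"
  using extreme_pts_subset finite_P finite_subset by blast

lemma extreme_pt_attains:
  assumes "x \<noteq> 0"
  obtains t where "t \<in> X" "t \<bullet> x = omega x P"
proof -
  obtain p where "p \<in> P" "p \<bullet> x = omega x P"
    using omega_attained[OF finite_P P_nonempty] by blast
  moreover from this have "x \<in> voronoi P p"
    using assms unfolding voronoi_def by simp
  ultimately show thesis
    using that unfolding extreme_pts_def by blast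
qed

lemma extreme_pt_supports:
  assumes "t \<in> X"
  obtains z where "0 < t \<bullet> z" "\<And>p. p \<in> P \<Longrightarrow> p \<bullet> z \<le> t \<bullet> z"
proof -
  obtain z where "z \<noteq> 0" "omega z P \<le> t \<bullet> z"
    using assms unfolding extreme_pts_def voronoi_def by auto
  then show thesis
  proof (intro that)
    show "0 < t \<bullet> z"
      using omega_P_pos[OF \<open>z \<noteq> 0\<close>] \<open>omega z P \<le> t \<bullet> z\<close> by simp
    show "p \<bullet> z \<le> t \<bullet> z" if "p \<in> P" for p
      using inner_le_omega[OF finite_P that, of z] \<open>omega z P \<le> t \<bullet> z\<close> by simp
  qed
qed

lemma extreme_pt_nonzero:
  assumes "t \<in> X"
  shows "t \<noteq> 0"
proof
  assume "t = 0"
  obtain z where "0 < t \<bullet> z"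
    using extreme_pt_supports[OF assms] by blast
  then show False
    using \<open>t = 0\<close> by simp
qed

lemma extreme_pt_scaleR_le_1:
  assumes "t \<in> X" "c *\<^sub>R t \<in> P" "0 < c"
  shows "c \<le> 1"
proof -
  obtain z where "0 < t \<bullet> z" "(c *\<^sub>R t) \<bullet> z \<le> t \<bullet> z"
    using extreme_pt_supports[OF assms(1)] assms(2) by blast
  then show ?thesis
    by simp
qed

lemma extreme_pts_eq_if_Arg_eq:
  assumes "t \<in> X" "s \<in> X" "Arg s = Arg t"
  shows "s = t"
proof -
  define c where "c = cmod s / cmod t"
  have "t \<noteq> 0" "s \<noteq> 0"
    using assms(1,2) extreme_pt_nonzero by auto
  then have "0 < c"
    unfolding c_def by simp
  have "Re s = c * Re t" "Im s = c * Im t"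
    using \<open>t \<noteq> 0\<close> assms(3) unfolding c_def
    by (simp_all add: cos_Arg[of s, symmetric] sin_Arg[of s, symmetric]
        cos_Arg[of t, symmetric] sin_Arg[of t, symmetric])
  then have "s = c *\<^sub>R t"
    by (simp add: complex_eq_iff)
  then have "inverse c *\<^sub>R s = t"
    using \<open>0 < c\<close> by simp
  have "c \<le> 1"
    using extreme_pt_scaleR_le_1[OF assms(1), of c] \<open>s = c *\<^sub>R t\<close> assms(2)
      extreme_pts_subset \<open>0 < c\<close> by auto
  moreover have "inverse c \<le> 1"
    using extreme_pt_scaleR_le_1[OF assms(2), of "inverse c"] \<open>inverse c *\<^sub>R s = t\<close> assms(1)
      extreme_pts_subset \<open>0 < c\<close> by auto
  ultimately have "c = 1"
    using \<open>0 < c\<close> by (metis antisym inverse_le_1_iff not_less)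
  then show ?thesis
    using \<open>s = c *\<^sub>R t\<close> by simp
qed

lemma ccw_succ_exists:
  assumes "t \<in> X"
  obtains t' where "ccw_succ P t t'" "0 < ccw_angle t t'" "ccw_angle t t' < pi"
proof -
  have "\<i> * t \<noteq> 0"
    using extreme_pt_nonzero[OF assms] by simp
  then obtain s where s: "s \<in> X" "s \<bullet> (\<i> * t) = omega (\<i> * t) P"
    by (rule extreme_pt_attains)
  have "cross t s = s \<bullet> (\<i> * t)"
    by (simp add: cross_def inner_complex_def)
  then have "0 < cross t s"
    using s(2) omega_P_pos[OF \<open>\<i> * t \<noteq> 0\<close>] by simp
  then have "s \<noteq> t"
    by (auto simp: cross_def)
  have s_angle: "0 < ccw_angle t s" "ccw_angle t s < pi"
    using cross_pos_iff_ccw_angle[of t s] \<open>0 < cross t s\<close> extreme_pt_nonzero assms s(1) by auto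
  obtain t' where t': "t' \<in> X - {t}" "\<And>y. y \<in> X - {t} \<Longrightarrow> ccw_angle t t' \<le> ccw_angle t y"
    using finite_arg_min[of "X - {t}" "ccw_angle t"] finite_extreme_pts s(1) \<open>s \<noteq> t\<close> by blast
  have "ccw_succ P t t'"
    unfolding ccw_succ_def using t' assms by blast
  moreover have "ccw_angle t t' < pi"
    using t'(2)[of s] s(1) \<open>s \<noteq> t\<close> s_angle by simp
  moreover have "ccw_angle t t' \<noteq> 0"
    using t' extreme_pts_eq_if_Arg_eq[OF assms, of t'] by (auto simp: ccw_angle_eq_0_iff)
  ultimately show thesis
    using that ccw_angle_bounds(1)[of t t'] by simp
qed

lemma ccw_succ_cone:
  obtains t t' where "ccw_succ P t t'" "0 < ccw_angle t t'" "ccw_angle t t' < pi"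
    "ccw_angle t q \<le> ccw_angle t t'"
proof -
  have "X \<noteq> {}"
    using extreme_pt_attains[of 1] by (metis empty_iff one_neq_zero)
  then obtain t where t: "t \<in> X" "\<And>s. s \<in> X \<Longrightarrow> ccw_angle t q \<le> ccw_angle s q"
    using finite_arg_min[of X "\<lambda>s. ccw_angle s q"] finite_extreme_pts by blast
  obtain t' where t': "ccw_succ P t t'" "0 < ccw_angle t t'" "ccw_angle t t' < pi"
    using ccw_succ_exists[OF t(1)] .
  have "ccw_angle t q \<le> ccw_angle t t'"
  proof (rule ccontr)
    assume "\<not> ?thesis"
    then have "ccw_angle t' q < ccw_angle t q"
      using ccw_angle_diff[of t t' q] t'(2) by simp
    moreover have "t' \<in> X"
      using t'(1) unfolding ccw_succ_def by simp
    ultimately show False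
      using t(2) by force
  qed
  then show thesis
    using that t' by blast
qed

lemma candidates_subset: "candidates P eps \<subseteq> P"
  unfolding candidates_def using extreme_pts_subset by auto

lemma candidate_nonzero:
  assumes "c \<in> candidates P eps"
  shows "c \<noteq> 0"
proof (cases "c \<in> X")
  case False
  then obtain t x where "0 < t \<bullet> x" "(1 - eps) * (t \<bullet> x) \<le> c \<bullet> x"
    using assms unfolding candidates_def by blast
  then have "0 < c \<bullet> x"
    using eps_less_1 by (smt (verit) mult_pos_pos)
  then show ?thesis
    by auto
qed (use extreme_pt_nonzero in blast)

lemma candidateI:
  assumes "q \<in> P" "x \<noteq> 0" "(1 - eps) * omega x P \<le> q \<bullet> x"
  shows "q \<in> candidates P eps"
proof (cases "q \<in> X")
  case False
  obtain t t' where succ: "ccw_succ P t t'" "0 < ccw_angle t t'" "ccw_angle t t' < pi"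
    and q_cone: "ccw_angle t q \<le> ccw_angle t t'"
    using ccw_succ_cone .
  have tX: "t \<in> X" "t' \<in> X"
    using succ(1) unfolding ccw_succ_def by auto
  then have "t \<noteq> 0" "t' \<noteq> 0"
    using extreme_pt_nonzero by auto
  then obtain \<alpha> \<beta> where \<alpha>\<beta>: "0 \<le> \<alpha>" "0 \<le> \<beta>" "q = \<alpha> *\<^sub>R t + \<beta> *\<^sub>R t'"
    using ccw_cone succ(2,3) q_cone by metis
  have "q \<bullet> x \<le> (\<alpha> + \<beta>) * omega x P"
    using \<alpha>\<beta> inner_le_omega[OF finite_P] tX extreme_pts_subset
    by (simp add: inner_add_left distrib_right add_mono mult_left_mono subset_iff)
  then have "(1 - eps) * omega x P \<le> (\<alpha> + \<beta>) * omega x P"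
    using assms(3) by linarith
  then have "1 - eps \<le> \<alpha> + \<beta>"
    using omega_P_pos[OF assms(2)] by (simp add: mult_le_cancel_right_pos)
  define xs where "xs = xstar t t'"
  have tt': "0 < cross t t'"
    using cross_pos_iff_ccw_angle \<open>t \<noteq> 0\<close> \<open>t' \<noteq> 0\<close> succ(2,3) by blast
  then have xs: "norm xs = 1" "t \<bullet> xs = t' \<bullet> xs" "0 < t \<bullet> xs"
    unfolding xs_def using norm_xstar[OF tt'] inner_xstar_endpoints[OF tt'] by auto
  have "q \<bullet> xs = (\<alpha> + \<beta>) * (t \<bullet> xs)"
    using xs(2) \<alpha>\<beta>(3) by (simp add: inner_add_left algebra_simps)
  then have "(1 - eps) * (t \<bullet> xs) \<le> q \<bullet> xs"
    using \<open>1 - eps \<le> \<alpha> + \<beta>\<close> xs(3) by (simp add: mult_right_mono)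
  then show ?thesis
    unfolding candidates_def using assms(1) False succ(1) xs by blast
qed (simp add: candidates_def)

section \<open>Cycles of G and regret sets\<close>

lemma G_edge_covers:
  assumes e: "G_edge P eps a b" and t: "t \<in> X" "ccw_angle a t \<le> ccw_angle a b"
    and x: "x \<noteq> 0" "t \<bullet> x = omega x P"
  shows "(1 - eps) * (t \<bullet> x) \<le> max (a \<bullet> x) (b \<bullet> x)"
proof -
  have ab: "a \<noteq> 0" "b \<noteq> 0" "0 < ccw_angle a b" "ccw_angle a b < pi" "l_edge P a b \<le> eps"
    using e candidate_nonzero unfolding G_edge_def by auto
  then have "0 < cross a b"
    using cross_pos_iff_ccw_angle by blast
  obtain \<alpha> \<beta> where \<alpha>\<beta>: "0 \<le> \<alpha>" "0 \<le> \<beta>" "t = \<alpha> *\<^sub>R a + \<beta> *\<^sub>R b"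
    using ccw_cone ab(1-4) t(2) by metis
  define xs where "xs = xstar a b"
  have "0 < a \<bullet> xs"
    using inner_xstar_endpoints(2)[OF \<open>0 < cross a b\<close>] unfolding xs_def .
  have t_xs: "t \<bullet> xs = (\<alpha> + \<beta>) * (a \<bullet> xs)" "0 < t \<bullet> xs"
    using inner_xstar_pos_cone[OF \<open>0 < cross a b\<close> \<alpha>\<beta>] extreme_pt_nonzero[OF t(1)]
    unfolding xs_def by auto
  have "t \<in> ext_range P a b"
    using t unfolding ext_range_def by simp
  then have "1 - (a \<bullet> xs) / (t \<bullet> xs) \<le> eps"
    using ab(5) l_edge_le_iff[OF finite_extreme_pts] eps_pos unfolding xs_def by auto
  then have "((1 - eps) * (\<alpha> + \<beta>)) * (a \<bullet> xs) \<le> 1 * (a \<bullet> xs)"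
    using t_xs by (simp add: field_simps)
  then have scale: "(1 - eps) * (\<alpha> + \<beta>) \<le> 1"
    using \<open>0 < a \<bullet> xs\<close> by (simp only: mult_le_cancel_right_pos)
  define M where "M = max (a \<bullet> x) (b \<bullet> x)"
  have "t \<bullet> x \<le> (\<alpha> + \<beta>) * M"
    using \<alpha>\<beta> unfolding M_def by (simp add: inner_add_left distrib_right add_mono mult_left_mono)
  moreover have "0 < t \<bullet> x"
    using x omega_P_pos by simp
  ultimately have "0 < M"
    using \<alpha>\<beta>(1,2) by (smt (verit) mult_nonneg_nonpos)
  have "(1 - eps) * (t \<bullet> x) \<le> ((1 - eps) * (\<alpha> + \<beta>)) * M"
    using \<open>t \<bullet> x \<le> (\<alpha> + \<beta>) * M\<close> eps_less_1 by (simp add: mult_left_mono)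
  also have "\<dots> \<le> M"
    using scale \<open>0 < M\<close> by (simp add: mult_le_cancel_right2)
  finally show ?thesis
    unfolding M_def .
qed

lemma G_cycle_regret_set:
  assumes "G_cycle P eps C"
  shows "regret_set P eps (set C)"
  unfolding regret_set_iff
proof (intro conjI allI impI)
  have C: "C \<noteq> []" "set C \<subseteq> candidates P eps"
    "\<And>i. i < length C \<Longrightarrow> G_edge P eps (C ! i) (C ! ((i + 1) mod length C))"
    using assms unfolding G_cycle_def by auto
  then show "set C \<noteq> {}" "set C \<subseteq> P"
    using candidates_subset by auto
  fix x :: complex
  assume "x \<noteq> 0"
  then obtain t where t: "t \<in> X" "t \<bullet> x = omega x P"
    by (rule extreme_pt_attains)
  have "\<forall>i<length C. 0 < ccw_angle (C ! i) (C ! ((i + 1) mod length C))"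
    using C(3) unfolding G_edge_def by blast
  then obtain i where i: "i < length C"
    "ccw_angle (C ! i) t \<le> ccw_angle (C ! i) (C ! ((i + 1) mod length C))"
    using ccw_cycle_covers[OF C(1)] by blast
  have "(1 - eps) * omega x P \<le> max (C ! i \<bullet> x) (C ! ((i + 1) mod length C) \<bullet> x)"
    using G_edge_covers[OF C(3)[OF i(1)] t(1) i(2) \<open>x \<noteq> 0\<close> t(2)] t(2) by simp
  also have "\<dots> \<le> omega x (set C)"
    using i(1) C(1) by (simp add: inner_le_omega)
  finally show "(1 - eps) * omega x P \<le> omega x (set C)" .
qed

lemma l_edge_le_if_support:
  assumes "0 < cross a b" "(1 - eps) * omega (xstar a b) P \<le> a \<bullet> xstar a b"
  shows "l_edge P a b \<le> eps"
  unfolding l_edge_le_iff[OF finite_extreme_pts less_imp_le[OF eps_pos]]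
proof
  fix t
  assume "t \<in> ext_range P a b"
  then have t: "t \<in> X" "ccw_angle a t \<le> ccw_angle a b"
    unfolding ext_range_def by auto
  have "a \<noteq> 0" "b \<noteq> 0"
    using assms(1) by (auto simp: cross_def)
  moreover have "0 < ccw_angle a b" "ccw_angle a b < pi"
    using cross_pos_iff_ccw_angle[OF \<open>a \<noteq> 0\<close> \<open>b \<noteq> 0\<close>] assms(1) by auto
  ultimately obtain \<alpha> \<beta> where "0 \<le> \<alpha>" "0 \<le> \<beta>" "t = \<alpha> *\<^sub>R a + \<beta> *\<^sub>R b"
    using ccw_cone t(2) by metis
  then have "0 < t \<bullet> xstar a b"
    using inner_xstar_pos_cone(2)[OF assms(1)] extreme_pt_nonzero[OF t(1)] by blast
  moreover have "(1 - eps) * (t \<bullet> xstar a b) \<le> a \<bullet> xstar a b"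
    using inner_le_omega[OF finite_P, of t "xstar a b"] t(1) extreme_pts_subset assms(2) eps_less_1
    by (smt (verit) mult_left_mono subsetD)
  ultimately show "1 - (a \<bullet> xstar a b) / (t \<bullet> xstar a b) \<le> eps"
    by (simp add: field_simps)
qed

lemma hull_edge_G_edge:
  assumes Q: "regret_set P eps Q" and e: "hull_edge Q q q'"
  shows "G_edge P eps q q'"
proof -
  have Q_sub: "Q \<subseteq> P" "finite Q"
    using Q finite_P finite_subset unfolding regret_set_def by auto
  have "0 < cross q q'"
    using hull_edge_cross_pos[OF Q_sub(2) regret_set_omega_pos[OF Q] e] .
  then have nz: "q \<noteq> 0" "q' \<noteq> 0"
    by (auto simp: cross_def)
  define xs where "xs = xstar q q'"
  have xs: "xs \<noteq> 0" "q' \<bullet> xs = q \<bullet> xs"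
    using norm_xstar[OF \<open>0 < cross q q'\<close>] inner_xstar_endpoints[OF \<open>0 < cross q q'\<close>]
    unfolding xs_def by auto
  have support: "(1 - eps) * omega xs P \<le> q \<bullet> xs"
    using Q xs(1) hull_edge_omega_xstar[OF Q_sub(2) e \<open>0 < cross q q'\<close>]
    unfolding regret_set_iff xs_def by metis
  have "q \<in> P" "q' \<in> P"
    using e Q_sub(1) unfolding hull_edge_def by auto
  have "q \<in> candidates P eps" "q' \<in> candidates P eps"
    using candidateI[OF \<open>q \<in> P\<close> xs(1) support] candidateI[OF \<open>q' \<in> P\<close> xs(1)] support xs(2)
    by simp_all
  moreover have "l_edge P q q' \<le> eps"
    using l_edge_le_if_support \<open>0 < cross q q'\<close> support unfolding xs_def by blast
  moreover have "0 < ccw_angle q q'" "ccw_angle q q' < pi"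
    using cross_pos_iff_ccw_angle[OF nz] \<open>0 < cross q q'\<close> by auto
  ultimately show ?thesis
    unfolding G_edge_def using e unfolding hull_edge_def by auto
qed

lemma regret_set_G_cycle:
  assumes "regret_set P eps Q"
  obtains cs where "G_cycle P eps cs" "length cs \<le> card Q"
proof -
  have Q: "finite Q" "Q \<noteq> {}" "\<not> is_singleton Q"
    using assms finite_P finite_subset omega_pos_not_singleton regret_set_omega_pos
    unfolding regret_set_def by metis+
  then obtain cs where cs: "cs \<noteq> []" "distinct cs"
    "\<And>i. i < length cs \<Longrightarrow> hull_edge Q (cs ! i) (cs ! ((i + 1) mod length cs))"
    by (rule hull_edge_cycle_exists) blast
  have edges: "G_edge P eps (cs ! i) (cs ! ((i + 1) mod length cs))" if "i < length cs" for i
    using hull_edge_G_edge[OF assms cs(3)[OF that]] .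
  have "set cs \<subseteq> Q"
    using cs(3) unfolding hull_edge_def by (metis in_set_conv_nth subsetI)
  then have "length cs \<le> card Q"
    using cs(2) Q(1) by (metis card_mono distinct_card)
  moreover have "G_cycle P eps cs"
    unfolding G_cycle_def using cs(1,2) edges unfolding G_edge_def by (metis in_set_conv_nth subsetI)
  ultimately show thesis
    using that by blast
qed

end

theorem theorem2:
  fixes P :: "complex set" and eps :: real and C :: "complex list"
  assumes "finite P" and "P \<noteq> {}" and "standing_cond P"
    and "0 < eps" and "eps < 1"
    and "G_cycle P eps C"
    and "\<forall>C'. G_cycle P eps C' \<longrightarrow> length C \<le> length C'"
  shows "regret_set P eps (set C) \<and>
         (\<forall>Q. regret_set P eps Q \<longrightarrow> card (set C) \<le> card Q)"
proof -
  interpret regret_problem P eps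
    using assms(1-5) by unfold_locales
  have "card (set C) = length C"
    using assms(6) distinct_card unfolding G_cycle_def by blast
  moreover have "length C \<le> card Q" if Q: "regret_set P eps Q" for Q
  proof -
    obtain cs where "G_cycle P eps cs" "length cs \<le> card Q"
      using regret_set_G_cycle[OF Q] .
    then show ?thesis
      using assms(7) by fastforce
  qed
  ultimately show ?thesis
    using G_cycle_regret_set[OF assms(6)] by simp
qed

end
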